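(* There exist absolute constants $c,C>0$ such that for every real $q\ge1$, every integer $d$ with $d-1>2q$, and every interval $[a,b]\subseteq\mathbb{R}$, if $U_1,\dots,U_{d-1}$ are iid uniform on $[0,1]$, then $$\mathbf{P}\Big[\sum_{i=1}^{d-1}U_i^q\in[a,b]\Big]\le\exp(-c\,d/q)+C\,(b-a)\sqrt{q/d}.$$ *)

theory Defs
  imports "HOL-Probability.Probability"
begin

definition iid_uniform01 :: "nat \<Rightarrow> (nat \<Rightarrow> real) measure" where
  "iid_uniform01 n = PiM {..<n} (\<lambda>_. uniform_measure lborel {0..1::real})"

end

theory Submission
  imports Defs
begin

text \<open>Let powr_avg q F s = E F(s + U^q) and window_avg c l F s = E F(s + V) with V uniform on
  [c, c+l); the probability in question is the n-th power of powr_avg q applied to the indicator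
  of [a, b], for n = d - 1. On the window [2^-q, 1] the density of U^q is at least 1/q, so each
  step is, with probability w = (1 - 2^-q)/q, a uniform step on that window. Averaging m times
  over a window of length l is a binomial mixture of translates of half-window averages, and these
  translates tile the line, so m uniform window steps put mass at most 2(b-a)/(l sqrt m) on [a, b].
  A Chernoff bound for the number of window steps among n, whose mean n w is of order d/q,
  finishes the proof.\<close>

lemma central_binomial_sq_le: "(real ((2*r) choose r) / 4^r)^2 * (2*r+1) \<le> 1"
proof (induction r)
  case 0
  then show ?case by simp
next
  case (Suc r)
  define z where "z = real ((2*r) choose r) / 4^r"
  have "Suc r * ((2 * Suc r) choose Suc r) = 2 * (2*r+1) * ((2*r) choose r)"
  proof -
    have "Suc r * (Suc (2*r+1) choose Suc r) = 2 * (Suc r * (Suc (2*r) choose Suc r))"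
      using Suc_times_binomial[of r "2*r+1"] Suc_times_binomial[of r "2*r"]
        binomial_symmetric[of r "2*r+1"] by (simp add: algebra_simps)
    also have "Suc r * (Suc (2*r) choose Suc r) = (2*r+1) * ((2*r) choose r)"
      using Suc_times_binomial[of r "2*r"] by simp
    finally show ?thesis by simp
  qed
  then have "(r+1) * real ((2 * Suc r) choose Suc r) = 2 * (2*r+1) * real ((2*r) choose r)"
    by (metis of_nat_mult of_nat_add of_nat_numeral of_nat_1 Suc_eq_plus1)
  then have rec: "real ((2 * Suc r) choose Suc r) / 4^Suc r = z * (2*r+1) / (2*r+2)"
    unfolding z_def by (simp add: divide_simps) (simp add: algebra_simps flip: mult_2_right)
  have "(real ((2 * Suc r) choose Suc r) / 4^Suc r)^2 * real (2 * Suc r + 1)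
      = (z * (2*r+1) / (2*r+2))^2 * (2*r+3)"
    by (simp only: rec) simp
  also have "\<dots> = z^2 * (2*r+1) * ((2*r+1) * (2*r+3) / (2*r+2)^2)"
    by (simp add: field_simps power2_eq_square)
  also have "\<dots> \<le> 1 * 1"
  proof (rule mult_mono)
    show "z^2 * (2*r+1) \<le> 1" using Suc.IH by (simp add: z_def)
    show "(2*r+1) * (2*r+3) / (2*r+2)^2 \<le> (1::real)"
      by (simp add: divide_le_eq power2_eq_square algebra_simps add_pos_nonneg)
  qed simp_all
  finally show ?case by simp
qed

lemma binomial_middle_le:
  assumes "m \<ge> 1"
  shows "real (m choose (m div 2)) / 2^m \<le> 1 / sqrt (real m)"
proof -
  obtain r where "m = 2*r \<or> m = 2*r + 1" by (metis oddE evenE)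
  then obtain r where r: "real (m choose (m div 2)) / 2^m = real ((2*r) choose r) / 4^r" and "m \<le> 2*r+1"
  proof
    assume "m = 2*r"
    then show ?thesis by (intro that[of r]) (auto simp: power_mult)
  next
    assume m: "m = 2*r+1"
    have "(2*r+2) choose (r+1) = 2 * ((2*r+1) choose r)"
      using binomial_symmetric[of r "2*r+1"] by simp
    then show ?thesis
      using m by (intro that[of "r+1"]) (auto simp: power_mult)
  qed
  have "(real (m choose (m div 2)) / 2^m)^2 * m \<le> (real ((2*r) choose r) / 4^r)^2 * (2*r+1)"
    unfolding r using \<open>m \<le> 2*r+1\<close> by (intro mult_left_mono) auto
  also have "\<dots> \<le> 1" by (rule central_binomial_sq_le)
  finally have "(real (m choose (m div 2)) / 2^m)^2 * m \<le> 1" .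
  moreover have "real (m choose (m div 2)) / 2^m * sqrt m = sqrt ((real (m choose (m div 2)) / 2^m)^2 * m)"
    by (simp add: real_sqrt_mult)
  ultimately show ?thesis
    using assms by (simp add: field_simps)
qed

definition window_avg :: "real \<Rightarrow> real \<Rightarrow> (real \<Rightarrow> ennreal) \<Rightarrow> real \<Rightarrow> ennreal" where
  "window_avg c l F s = ennreal (1/l) * (\<integral>\<^sup>+x. F (s + x) * indicator {c..<c+l} x \<partial>lborel)"

definition powr_avg :: "real \<Rightarrow> (real \<Rightarrow> ennreal) \<Rightarrow> real \<Rightarrow> ennreal" where
  "powr_avg q F s = (\<integral>\<^sup>+u. F (s + u powr q) * indicator {0..1} u \<partial>lborel)"

lemma window_avg_measurable [measurable]:
  assumes [measurable]: "F \<in> borel_measurable borel"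
  shows "window_avg c l F \<in> borel_measurable borel"
  unfolding window_avg_def by measurable

lemma powr_avg_measurable [measurable]:
  assumes [measurable]: "F \<in> borel_measurable borel"
  shows "powr_avg q F \<in> borel_measurable borel"
  unfolding powr_avg_def by measurable

lemma window_avg_funpow_measurable [measurable]:
  "F \<in> borel_measurable borel \<Longrightarrow> (window_avg c l ^^ n) F \<in> borel_measurable borel"
  by (induction n) auto

lemma powr_avg_funpow_measurable [measurable]:
  "F \<in> borel_measurable borel \<Longrightarrow> (powr_avg q ^^ n) F \<in> borel_measurable borel"
  by (induction n) auto

lemma window_avg_le:
  assumes "l > 0" and "\<And>t. F t \<le> M"
  shows "window_avg c l F s \<le> M"
proof -
  have "(\<integral>\<^sup>+x. F (s + x) * indicator {c..<c+l} x \<partial>lborel) \<le> (\<integral>\<^sup>+x. M * indicator {c..<c+l} x \<partial>lborel)"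
    by (intro nn_integral_mono mult_right_mono assms) auto
  also have "\<dots> = M * ennreal l"
    using assms by (simp add: nn_integral_cmult)
  finally have "window_avg c l F s \<le> ennreal (1/l) * (M * ennreal l)"
    unfolding window_avg_def by (intro mult_left_mono) auto
  also have "\<dots> = M"
    using assms by (simp add: ennreal_mult'[symmetric] mult.commute mult.left_commute)
  finally show ?thesis .
qed

lemma window_avg_funpow_le:
  assumes "l > 0" and "\<And>t. F t \<le> M"
  shows "(window_avg c l ^^ m) F s \<le> M"
  by (induction m arbitrary: s) (simp_all add: assms window_avg_le)

lemma window_avg_shift: "window_avg c l (\<lambda>t. F (t + d)) s = window_avg c l F (s + d)"
  unfolding window_avg_def by (simp add: add_ac)

lemma window_avg_sum:
  assumes "finite J" and [measurable]: "\<And>j. j \<in> J \<Longrightarrow> G j \<in> borel_measurable borel"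
  shows "window_avg c l (\<lambda>t. \<Sum>j\<in>J. G j t) s = (\<Sum>j\<in>J. window_avg c l (G j) s)"
proof -
  have "(\<integral>\<^sup>+x. (\<Sum>j\<in>J. G j (s + x)) * indicator {c..<c+l} x \<partial>lborel)
      = (\<Sum>j\<in>J. \<integral>\<^sup>+x. G j (s + x) * indicator {c..<c+l} x \<partial>lborel)"
    unfolding sum_distrib_right by (rule nn_integral_sum) (use assms in auto)
  then show ?thesis unfolding window_avg_def by (simp add: sum_distrib_left)
qed

lemma window_avg_cmult:
  assumes [measurable]: "G \<in> borel_measurable borel"
  shows "window_avg c l (\<lambda>t. k * G t) s = k * window_avg c l G s"
proof -
  have "(\<integral>\<^sup>+x. (k * G (s + x)) * indicator {c..<c+l} x \<partial>lborel)
      = k * (\<integral>\<^sup>+x. G (s + x) * indicator {c..<c+l} x \<partial>lborel)"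
    by (subst nn_integral_cmult[symmetric]) (auto simp: mult.assoc)
  then show ?thesis unfolding window_avg_def by (simp add: mult_ac)
qed

lemma window_avg_double:
  assumes "h > 0" and [measurable]: "F \<in> borel_measurable borel"
  shows "window_avg c (2*h) F s = ennreal (1/2) * (window_avg c h F s + window_avg c h F (s + h))"
proof -
  have "(\<integral>\<^sup>+x. F (s + x) * indicator {c..<c+2*h} x \<partial>lborel)
     = (\<integral>\<^sup>+x. F (s + x) * indicator {c..<c+h} x + F (s + x) * indicator {c+h..<c+2*h} x \<partial>lborel)"
    using assms by (intro nn_integral_cong) (auto simp: indicator_def)
  also have "\<dots> = (\<integral>\<^sup>+x. F (s + x) * indicator {c..<c+h} x \<partial>lborel)
      + (\<integral>\<^sup>+x. F (s + x) * indicator {c+h..<c+2*h} x \<partial>lborel)"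
    by (rule nn_integral_add) auto
  also have "(\<integral>\<^sup>+x. F (s + x) * indicator {c+h..<c+2*h} x \<partial>lborel)
      = (\<integral>\<^sup>+x. F (s + h + x) * indicator {c..<c+h} x \<partial>lborel)"
    by (subst nn_integral_real_affine[where c=1 and t=h])
       (auto simp: add_ac indicator_def intro!: nn_integral_cong)
  finally have split: "(\<integral>\<^sup>+x. F (s + x) * indicator {c..<c+2*h} x \<partial>lborel) =
     (\<integral>\<^sup>+x. F (s + x) * indicator {c..<c+h} x \<partial>lborel) + (\<integral>\<^sup>+x. F (s + h + x) * indicator {c..<c+h} x \<partial>lborel)" .
  have "ennreal (1/2) * ennreal (1/h) = ennreal (1/(2*h))"
    using assms by (subst ennreal_mult[symmetric]) auto
  then show ?thesis
    by (simp only: window_avg_def split distrib_left mult.assoc[symmetric])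
qed

lemma sum_binomial_Suc_split:
  fixes f :: "nat \<Rightarrow> 'a::comm_semiring_1"
  shows "(\<Sum>j\<le>Suc m. of_nat (Suc m choose j) * f j)
       = (\<Sum>j\<le>m. of_nat (m choose j) * f j) + (\<Sum>j\<le>m. of_nat (m choose j) * f (Suc j))"
proof -
  have "(\<Sum>j\<le>m. of_nat (m choose j) * f j) = (\<Sum>j\<le>Suc m. of_nat (m choose j) * f j)"
    by (simp add: binomial_eq_0)
  also have "\<dots> = f 0 + (\<Sum>j\<le>m. of_nat (m choose Suc j) * f (Suc j))"
    by (subst sum.atMost_Suc_shift) simp
  finally show ?thesis
    by (subst sum.atMost_Suc_shift) (simp add: distrib_right sum.distrib add_ac)
qed

lemma window_avg_double_funpow:
  assumes h: "h > 0" and [measurable]: "F \<in> borel_measurable borel"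
  shows "(window_avg c (2*h) ^^ m) F s
       = ennreal (1/2^m) * (\<Sum>j\<le>m. of_nat (m choose j) * (window_avg c h ^^ m) F (s + j*h))"
proof (induction m arbitrary: s)
  case 0
  then show ?case by simp
next
  case (Suc m)
  define K where "K = (window_avg c h ^^ m) F"
  have [measurable]: "K \<in> borel_measurable borel" unfolding K_def by measurable
  have half: "window_avg c h ((window_avg c (2*h) ^^ m) F) t
      = ennreal (1/2^m) * (\<Sum>j\<le>m. of_nat (m choose j) * window_avg c h K (t + j*h))" for t
  proof -
    have "window_avg c h ((window_avg c (2*h) ^^ m) F) t
        = ennreal (1/2^m) * window_avg c h (\<lambda>t. \<Sum>j\<le>m. of_nat (m choose j) * K (t + j*h)) t"
      unfolding Suc.IH K_def[symmetric] by (rule window_avg_cmult) measurable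
    also have "window_avg c h (\<lambda>t. \<Sum>j\<le>m. of_nat (m choose j) * K (t + j*h)) t
       = (\<Sum>j\<le>m. of_nat (m choose j) * window_avg c h K (t + j*h))"
      by (subst window_avg_sum) (auto simp: window_avg_cmult window_avg_shift)
    finally show ?thesis .
  qed
  have "ennreal (1/2) * ennreal (1/2^m) = ennreal (1/2^Suc m)"
    by (subst ennreal_mult[symmetric]) auto
  then have "(window_avg c (2*h) ^^ Suc m) F s = ennreal (1/2^Suc m) *
      ((\<Sum>j\<le>m. of_nat (m choose j) * window_avg c h K (s + j*h))
      + (\<Sum>j\<le>m. of_nat (m choose j) * window_avg c h K (s + real (Suc j)*h)))"
    using h by (simp add: window_avg_double half distrib_left mult.assoc[symmetric] add_ac distrib_right)
  also have "\<dots> = ennreal (1/2^Suc m) * (\<Sum>j\<le>Suc m. of_nat (Suc m choose j) * window_avg c h K (s + j*h))"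
    by (simp only: sum_binomial_Suc_split[where f="\<lambda>j. window_avg c h K (s + real j*h)"])
  finally show ?case unfolding K_def by (simp only: funpow.simps comp_def)
qed

lemma sum_indicator_translates_le_1:
  assumes "h > 0"
  shows "(\<Sum>j\<le>N. indicator {c..<c+h} (y - real j * h) :: ennreal) \<le> 1"
proof -
  define A where "A j = {c + real j * h..<c + real j * h + h}" for j
  have "disjoint_family_on A {..N}"
    unfolding disjoint_family_on_def
  proof (intro ballI impI)
    fix i j :: nat assume "i \<noteq> j"
    then have "A i \<inter> A j = {}" if "i < j" for i j :: nat
      using that \<open>h > 0\<close> mult_right_mono[of "real i + 1" "real j" h] by (auto simp: A_def algebra_simps)
    then show "A i \<inter> A j = {}"
      using \<open>i \<noteq> j\<close> by (metis Int_commute linorder_neqE_nat)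
  qed
  then have "(\<Sum>j\<le>N. indicator (A j) y :: ennreal) = indicator (\<Union>j\<le>N. A j) y"
    by (simp add: indicator_UN_disjoint)
  moreover have "indicator {c..<c+h} (y - real j * h) = (indicator (A j) y :: ennreal)" for j
    by (auto simp: A_def indicator_def)
  ultimately show ?thesis by (simp add: indicator_def)
qed

lemma sum_window_avg_translates_le:
  assumes "h > 0" and [measurable]: "g \<in> borel_measurable borel"
  shows "(\<Sum>j\<le>N. window_avg c h g (t + real j * h)) \<le> ennreal (1/h) * integral\<^sup>N lborel g"
proof -
  let ?I = "\<lambda>j y. indicator {c..<c+h} (y - t - real j * h) :: ennreal"
  have "(\<integral>\<^sup>+x. g (t + real j * h + x) * indicator {c..<c+h} x \<partial>lborel) = (\<integral>\<^sup>+y. g y * ?I j y \<partial>lborel)" for j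
    by (subst nn_integral_real_affine[where c=1 and t="t + real j * h"]) (auto simp: add_ac)
  then have "(\<Sum>j\<le>N. window_avg c h g (t + real j * h))
      = ennreal (1/h) * (\<Sum>j\<le>N. \<integral>\<^sup>+y. g y * ?I j y \<partial>lborel)"
    by (simp add: window_avg_def sum_distrib_left)
  also have "(\<Sum>j\<le>N. \<integral>\<^sup>+y. g y * ?I j y \<partial>lborel) = (\<integral>\<^sup>+y. g y * (\<Sum>j\<le>N. ?I j y) \<partial>lborel)"
    unfolding sum_distrib_left by (rule nn_integral_sum[symmetric]) auto
  also have "\<dots> \<le> integral\<^sup>N lborel g"
    using sum_indicator_translates_le_1[OF \<open>h > 0\<close>, where y="_ - t"]
    by (intro nn_integral_mono) (auto intro: mult_left_le simp: diff_diff_eq)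
  finally show ?thesis by (simp add: mult_left_mono)
qed

lemma sum_window_avg_funpow_translates_le:
  assumes "h > 0" and [measurable]: "g \<in> borel_measurable borel"
  shows "(\<Sum>j\<le>N. (window_avg c h ^^ Suc k) g (t + real j * h)) \<le> ennreal (1/h) * integral\<^sup>N lborel g"
proof (induction k arbitrary: t)
  case 0
  then show ?case using sum_window_avg_translates_le[OF assms] by simp
next
  case (Suc k)
  define K where "K = (window_avg c h ^^ Suc k) g"
  have [measurable]: "K \<in> borel_measurable borel" unfolding K_def by measurable
  have "(\<Sum>j\<le>N. (window_avg c h ^^ Suc (Suc k)) g (t + real j * h))
      = window_avg c h (\<lambda>u. \<Sum>j\<le>N. K (u + real j * h)) t"
    unfolding K_def by (subst window_avg_sum) (auto simp: window_avg_shift)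
  also have "\<dots> \<le> ennreal (1/h) * integral\<^sup>N lborel g"
    using Suc.IH by (intro window_avg_le \<open>h > 0\<close>) (simp add: K_def)
  finally show ?case .
qed

lemma window_avg_funpow_indicator_le:
  assumes l: "l > 0" and ab: "a \<le> b" and m: "m \<ge> 1"
  shows "(window_avg c l ^^ m) (indicator {a..b}) s \<le> ennreal (2*(b-a) / (l * sqrt m))"
proof -
  let ?K = "(window_avg c (l/2) ^^ m) (indicator {a..b})"
  let ?C = "m choose (m div 2)"
  have "(window_avg c l ^^ m) (indicator {a..b}) s
      = ennreal (1/2^m) * (\<Sum>j\<le>m. of_nat (m choose j) * ?K (s + j*(l/2)))"
    using window_avg_double_funpow[of "l/2"] l by simp
  also have "\<dots> \<le> ennreal (1/2^m) * of_nat ?C * (\<Sum>j\<le>m. ?K (s + j*(l/2)))"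
    unfolding mult.assoc sum_distrib_left
    by (intro mult_left_mono sum_mono mult_right_mono) (auto simp: binomial_maximum)
  also have "\<dots> \<le> ennreal (1/2^m) * of_nat ?C * (ennreal (2/l) * ennreal (b - a))"
    using sum_window_avg_funpow_translates_le[where h="l/2" and g="indicator {a..b}" and N=m and k="m - 1" and t=s] l m ab
    by (intro mult_left_mono) simp_all
  also have "ennreal (1/2^m) * of_nat ?C * (ennreal (2/l) * ennreal (b - a))
      = ennreal (real ?C / 2^m * (2*(b-a)/l))"
    using l ab by (simp add: ennreal_mult'[symmetric] ennreal_of_nat_eq_real_of_nat mult_ac)
  also have "\<dots> \<le> ennreal (1 / sqrt m * (2*(b-a)/l))"
    using binomial_middle_le[OF m] l ab by (intro ennreal_leI mult_right_mono) auto
  finally show ?thesis by (simp add: mult.commute)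
qed

lemma nn_integral_powr_substitution:
  fixes G :: "real \<Rightarrow> ennreal"
  assumes q: "q > 0" and [measurable]: "G \<in> borel_measurable borel"
  shows "(\<integral>\<^sup>+x. G x * ennreal ((1/q) * x powr (1/q - 1)) * indicator {(1/2) powr q..<1} x \<partial>lborel)
       = (\<integral>\<^sup>+u. G (u powr q) * indicator {1/2..1} u \<partial>lborel)"
proof -
  let ?f = "\<lambda>x. G x * ennreal ((1/q) * x powr (1/q - 1))"
  have "(\<integral>\<^sup>+x. ?f x * indicator {(1/2) powr q..<1} x \<partial>lborel)
      = (\<integral>\<^sup>+x. ?f x * indicator {(\<lambda>u. u powr q) (1/2)..(\<lambda>u. u powr q) 1} x \<partial>lborel)"
    by (intro nn_integral_cong_AE, rule eventually_mono[OF AE_lborel_singleton[of 1]])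
       (auto simp: indicator_def)
  also have "\<dots> = (\<integral>\<^sup>+u. ?f (u powr q) * ennreal (q * u powr (q - 1)) * indicator {1/2..1} u \<partial>lborel)"
  proof (rule nn_integral_substitution_aux)
    show "\<And>x. x \<in> {1/2..1::real} \<Longrightarrow> ((\<lambda>u. u powr q) has_real_derivative q * x powr (q - 1)) (at x)"
      by (rule has_real_derivative_powr) auto
    show "continuous_on {1/2..1::real} (\<lambda>u. q * u powr (q - 1))"
      by (intro continuous_intros) auto
  qed (use q in auto)
  also have "\<dots> = (\<integral>\<^sup>+u. G (u powr q) * indicator {1/2..1} u \<partial>lborel)"
  proof (intro nn_integral_cong)
    fix u :: real
    show "?f (u powr q) * ennreal (q * u powr (q - 1)) * indicator {1/2..1} u = G (u powr q) * indicator {1/2..1} u"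
    proof (cases "u \<in> {1/2..1}")
      case True
      then have "u > 0" by auto
      have "(1/q) * (u powr q) powr (1/q - 1) * (q * u powr (q - 1)) = u powr (q * (1/q - 1) + (q - 1))"
        using q \<open>u > 0\<close> by (simp add: powr_powr powr_add)
      also have "q * (1/q - 1) + (q - 1) = 0" using q by (simp add: field_simps)
      finally show ?thesis
        using True q by (simp add: mult.assoc ennreal_mult'[symmetric])
    qed simp
  qed
  finally show ?thesis .
qed

lemma half_powr_le_half:
  assumes "q \<ge> 1"
  shows "(1/2::real) powr q \<le> 1/2"
  using powr_mono'[of 1 q "1/2::real"] assms by simp

lemma powr_density_ge:
  assumes "q \<ge> 1" and "0 < x" "x \<le> (1::real)"
  shows "(1/q) * x powr (1/q - 1) \<ge> 1/q"
proof -
  have "x powr (1/q - 1) \<ge> 1 powr (1/q - 1)"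
    using assms by (intro powr_mono2') (auto simp: divide_le_eq)
  then show ?thesis using assms by (simp add: divide_le_eq)
qed

lemma powr_density_excess:
  assumes q: "q \<ge> 1"
  defines "c \<equiv> (1/2::real) powr q"
  shows "(\<integral>\<^sup>+x. ennreal ((1/q) * x powr (1/q - 1) - 1/q) * indicator {c..<1} x \<partial>lborel)
           = ennreal (1/2 - (1 - c)/q)"
    and "(1 - c)/q \<le> 1/2"
proof -
  let ?h = "\<lambda>x::real. (1/q) * x powr (1/q - 1)"
  define X where "X = (\<integral>\<^sup>+x. ennreal (?h x - 1/q) * indicator {c..<1} x \<partial>lborel)"
  have c: "0 < c" "c \<le> 1/2" unfolding c_def using half_powr_le_half[OF q] by auto
  have "ennreal (1/2) = (\<integral>\<^sup>+x. ennreal (?h x) * indicator {c..<1} x \<partial>lborel)"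
    using nn_integral_powr_substitution[of q "\<lambda>_. 1"] q by (simp add: c_def)
  also have "\<dots> = (\<integral>\<^sup>+x. ennreal (1/q) * indicator {c..<1} x + ennreal (?h x - 1/q) * indicator {c..<1} x \<partial>lborel)"
  proof (intro nn_integral_cong)
    fix x :: real
    show "ennreal (?h x) * indicator {c..<1} x = ennreal (1/q) * indicator {c..<1} x + ennreal (?h x - 1/q) * indicator {c..<1} x"
      using powr_density_ge[OF q, of x] c q by (cases "x \<in> {c..<1}") (auto simp flip: ennreal_plus)
  qed
  also have "\<dots> = ennreal ((1 - c)/q) + X"
    unfolding X_def using c q by (subst nn_integral_add) (auto simp: nn_integral_cmult ennreal_mult'[symmetric])
  finally have mass: "ennreal (1/2) = ennreal ((1 - c)/q) + X" .
  then have "ennreal ((1 - c)/q) \<le> ennreal (1/2)" by simp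
  then show lq: "(1 - c)/q \<le> 1/2" by (rule ennreal_le_iff[THEN iffD1, rotated]) simp
  have "X = ennreal (1/2) - ennreal ((1 - c)/q)" unfolding mass by simp
  also have "\<dots> = ennreal (1/2 - (1 - c)/q)" using c q by (subst ennreal_minus) auto
  finally show "X = ennreal (1/2 - (1 - c)/q)" .
qed

text \<open>On [2^-q, 1] the density of U^q is at least 1/q, so U^q is a mixture: with probability
  (1 - 2^-q)/q it is uniform on that window.\<close>
lemma powr_avg_le_window_mixture:
  assumes q: "q \<ge> 1" and [measurable]: "F \<in> borel_measurable borel" and FM: "\<And>t. F t \<le> M"
  defines "c \<equiv> (1/2::real) powr q"
  shows "powr_avg q F s \<le> ennreal ((1 - c)/q) * window_avg c (1 - c) F s + ennreal (1 - (1 - c)/q) * M"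
proof -
  let ?h = "\<lambda>x::real. (1/q) * x powr (1/q - 1)"
  define l where "l = 1 - c"
  have c: "0 < c" "c \<le> 1/2" unfolding c_def using half_powr_le_half[OF q] by auto
  have "powr_avg q F s = (\<integral>\<^sup>+u. F (s + u powr q) * indicator {0..<1/2} u \<partial>lborel)
      + (\<integral>\<^sup>+u. F (s + u powr q) * indicator {1/2..1} u \<partial>lborel)"
    unfolding powr_avg_def
    by (subst nn_integral_add[symmetric]) (auto intro!: nn_integral_cong simp: indicator_def)
  also have "(\<integral>\<^sup>+u. F (s + u powr q) * indicator {0..<1/2} u \<partial>lborel) \<le> M * ennreal (1/2)"
  proof -
    have "(\<integral>\<^sup>+u. F (s + u powr q) * indicator {0..<1/2} u \<partial>lborel) \<le> (\<integral>\<^sup>+u. M * indicator {0..<1/2::real} u \<partial>lborel)"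
      by (intro nn_integral_mono mult_right_mono FM) auto
    then show ?thesis by (simp add: nn_integral_cmult)
  qed
  also have "(\<integral>\<^sup>+u. F (s + u powr q) * indicator {1/2..1} u \<partial>lborel)
      = (\<integral>\<^sup>+x. F (s + x) * ennreal (?h x) * indicator {c..<1} x \<partial>lborel)"
    unfolding c_def using q by (intro nn_integral_powr_substitution[symmetric]) auto
  also have "\<dots> \<le> (\<integral>\<^sup>+x. ennreal (1/q) * (F (s + x) * indicator {c..<1} x)
      + M * (ennreal (?h x - 1/q) * indicator {c..<1} x) \<partial>lborel)"
  proof (intro nn_integral_mono)
    fix x :: real
    show "F (s + x) * ennreal (?h x) * indicator {c..<1} x
      \<le> ennreal (1/q) * (F (s + x) * indicator {c..<1} x) + M * (ennreal (?h x - 1/q) * indicator {c..<1} x)"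
    proof (cases "x \<in> {c..<1}")
      case True
      then have "ennreal (?h x) = ennreal (1/q) + ennreal (?h x - 1/q)"
        using powr_density_ge[OF q, of x] c q by (subst ennreal_plus[symmetric]) auto
      then have "F (s + x) * ennreal (?h x) = ennreal (1/q) * F (s + x) + F (s + x) * ennreal (?h x - 1/q)"
        by (simp add: distrib_left mult.commute)
      also have "\<dots> \<le> ennreal (1/q) * F (s + x) + M * ennreal (?h x - 1/q)"
        by (intro add_left_mono mult_right_mono FM) auto
      finally show ?thesis using True by simp
    qed simp
  qed
  also have "\<dots> = ennreal (l/q) * window_avg c l F s + M * ennreal (1/2 - l/q)"
  proof -
    have "ennreal (1/q) = ennreal (l/q) * ennreal (1/l)"
      using c q by (subst ennreal_mult[symmetric]) (auto simp: l_def)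
    then show ?thesis
      using powr_density_excess(1)[OF q] c
      by (subst nn_integral_add) (auto simp: nn_integral_cmult window_avg_def l_def c_def mult.assoc)
  qed
  also have "M * ennreal (1/2) + (ennreal (l/q) * window_avg c l F s + M * ennreal (1/2 - l/q))
      = ennreal (l/q) * window_avg c l F s + M * (ennreal (1/2) + ennreal (1/2 - l/q))"
    by (simp add: distrib_left add_ac)
  also have "ennreal (1/2) + ennreal (1/2 - l/q) = ennreal (1 - l/q)"
    using powr_density_excess(2)[OF q] by (subst ennreal_plus[symmetric]) (auto simp: l_def c_def)
  finally show ?thesis
    unfolding l_def by (simp add: add_mono mult.commute)
qed

lemma window_avg_powr_avg_commute:
  assumes [measurable]: "F \<in> borel_measurable borel"
  shows "window_avg c l (powr_avg q F) s = powr_avg q (window_avg c l F) s"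
proof -
  define f where "f = (\<lambda>x u. F (s + x + u powr q) * indicator {0..1::real} u * indicator {c..<c+l} x)"
  have [measurable]: "case_prod f \<in> borel_measurable (lborel \<Otimes>\<^sub>M lborel)" unfolding f_def by measurable
  have "window_avg c l (powr_avg q F) s = ennreal (1/l) * (\<integral>\<^sup>+x. (\<integral>\<^sup>+u. f x u \<partial>lborel) \<partial>lborel)"
    unfolding window_avg_def powr_avg_def f_def
    by (simp add: nn_integral_multc[symmetric] add.assoc)
  also have "(\<integral>\<^sup>+x. (\<integral>\<^sup>+u. f x u \<partial>lborel) \<partial>lborel) = (\<integral>\<^sup>+u. (\<integral>\<^sup>+x. f x u \<partial>lborel) \<partial>lborel)"
    by (rule lborel_pair.Fubini'[symmetric]) measurable
  also have "ennreal (1/l) * \<dots> = powr_avg q (window_avg c l F) s"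
    unfolding window_avg_def powr_avg_def f_def
    by (subst nn_integral_cmult[symmetric])
       (auto simp: nn_integral_cmult mult_ac add_ac intro!: nn_integral_cong)
  finally show ?thesis .
qed

lemma window_avg_powr_avg_funpow_commute:
  assumes [measurable]: "F \<in> borel_measurable borel"
  shows "window_avg c l ((powr_avg q ^^ n) F) = (powr_avg q ^^ n) (window_avg c l F)"
  by (induction n) (auto simp: window_avg_powr_avg_commute)

text \<open>(w lam + 1 - w)^n is the generating function, at lam, of the binomial number of window
  steps among n steps.\<close>
lemma powr_avg_funpow_window_mixture:
  fixes A B lam :: real
  assumes q: "q \<ge> 1" and [measurable]: "g \<in> borel_measurable borel"
    and "A \<ge> 0" "B \<ge> 0" "lam \<ge> 0"
  defines "c \<equiv> (1/2::real) powr q"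
  defines "w \<equiv> (1 - c)/q"
  assumes base: "\<And>m t. (window_avg c (1 - c) ^^ m) g t \<le> ennreal (A + B * lam^m)"
  shows "(powr_avg q ^^ n) ((window_avg c (1 - c) ^^ j) g) s \<le> ennreal (A + B * lam^j * (w * lam + 1 - w)^n)"
proof (induction n arbitrary: j s)
  case 0
  then show ?case using base by simp
next
  case (Suc n)
  define r where "r = w * lam + 1 - w"
  have c: "0 < c" "c \<le> 1/2" unfolding c_def using half_powr_le_half[OF q] by auto
  have w: "0 \<le> w" "w \<le> 1" unfolding w_def using c q by (auto simp: divide_le_eq)
  have "r \<ge> 0" unfolding r_def using w \<open>lam \<ge> 0\<close> mult_nonneg_nonneg[of w lam] by linarith
  then have nonneg: "A + B * lam^i * r^n \<ge> 0" for i
    using \<open>A \<ge> 0\<close> \<open>B \<ge> 0\<close> \<open>lam \<ge> 0\<close> by simp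
  define G where "G = (powr_avg q ^^ n) ((window_avg c (1 - c) ^^ j) g)"
  have [measurable]: "G \<in> borel_measurable borel" unfolding G_def by measurable
  have "(powr_avg q ^^ Suc n) ((window_avg c (1 - c) ^^ j) g) s = powr_avg q G s"
    unfolding G_def by (simp add: funpow_swap1)
  also have "\<dots> \<le> ennreal w * window_avg c (1 - c) G s + ennreal (1 - w) * ennreal (A + B * lam^j * r^n)"
    using powr_avg_le_window_mixture[OF q, of G] Suc.IH unfolding G_def r_def w_def c_def by auto
  also have "window_avg c (1 - c) G s = (powr_avg q ^^ n) ((window_avg c (1 - c) ^^ Suc j) g) s"
    unfolding G_def by (simp add: window_avg_powr_avg_funpow_commute)
  also have "\<dots> \<le> ennreal (A + B * lam^Suc j * r^n)"
    unfolding r_def by (rule Suc.IH)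
  also have "ennreal w * ennreal (A + B * lam^Suc j * r^n) + ennreal (1 - w) * ennreal (A + B * lam^j * r^n)
      = ennreal (w * (A + B * lam^Suc j * r^n) + (1 - w) * (A + B * lam^j * r^n))"
    using w nonneg[of j] nonneg[of "Suc j"]
    by (simp add: ennreal_mult'[symmetric] del: power_Suc)
  also have "w * (A + B * lam^Suc j * r^n) + (1 - w) * (A + B * lam^j * r^n) = A + B * lam^j * r^Suc n"
    unfolding r_def by (simp add: algebra_simps)
  finally show ?case
    unfolding r_def by (simp add: mult_left_mono add_right_mono)
qed

lemma product_sigma_finite_uniform01: "product_sigma_finite (\<lambda>_. uniform_measure lborel {0..1::real})"
  unfolding product_sigma_finite_def
  by (intro allI prob_space_imp_sigma_finite prob_space_uniform_measure) auto

lemma nn_integral_iid_uniform01_sum_powr: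
  assumes [measurable]: "f \<in> borel_measurable borel"
  shows "(\<integral>\<^sup>+u. f (s + (\<Sum>i<n. u i powr q)) \<partial>iid_uniform01 n) = (powr_avg q ^^ n) f s"
  using assms
proof (induction n arbitrary: f s)
  case 0
  then show ?case unfolding iid_uniform01_def by (simp add: PiM_empty)
next
  case (Suc n)
  note [measurable] = Suc.prems
  interpret product_sigma_finite "\<lambda>_. uniform_measure lborel {0..1::real}"
    by (rule product_sigma_finite_uniform01)
  let ?U = "uniform_measure lborel {0..1::real}"
  have "(\<integral>\<^sup>+u. f (s + (\<Sum>i<Suc n. u i powr q)) \<partial>iid_uniform01 (Suc n))
     = (\<integral>\<^sup>+x. (\<integral>\<^sup>+y. f (s + (\<Sum>i<Suc n. (x(n := y)) i powr q)) \<partial>?U) \<partial>iid_uniform01 n)"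
    unfolding iid_uniform01_def lessThan_Suc by (rule product_nn_integral_insert) auto
  also have "\<dots> = (\<integral>\<^sup>+x. powr_avg q f (s + (\<Sum>i<n. x i powr q)) \<partial>iid_uniform01 n)"
  proof (rule nn_integral_cong)
    fix x :: "nat \<Rightarrow> real"
    have "(\<integral>\<^sup>+y. f (s + (\<Sum>i<Suc n. (x(n := y)) i powr q)) \<partial>?U)
        = (\<integral>\<^sup>+y. f (s + (\<Sum>i<n. x i powr q) + y powr q) * indicator {0..1} y \<partial>lborel)"
      by (subst nn_integral_uniform_measure) (auto simp: add.assoc divide_ennreal_def)
    then show "(\<integral>\<^sup>+y. f (s + (\<Sum>i<Suc n. (x(n := y)) i powr q)) \<partial>?U) = powr_avg q f (s + (\<Sum>i<n. x i powr q))"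
      unfolding powr_avg_def .
  qed
  also have "\<dots> = (powr_avg q ^^ Suc n) f s"
    using Suc.IH[of "powr_avg q f" s] by (simp add: funpow_swap1)
  finally show ?case .
qed

lemma emeasure_iid_uniform01_sum_powr_in_interval:
  "emeasure (iid_uniform01 n) {u \<in> space (iid_uniform01 n). (\<Sum>i<n. u i powr q) \<in> {a..b}}
    = (powr_avg q ^^ n) (indicator {a..b}) 0"
proof -
  have "emeasure (iid_uniform01 n) {u \<in> space (iid_uniform01 n). (\<Sum>i<n. u i powr q) \<in> {a..b}}
     = (\<integral>\<^sup>+u. indicator {u \<in> space (iid_uniform01 n). (\<Sum>i<n. u i powr q) \<in> {a..b}} u \<partial>iid_uniform01 n)"
    by (rule nn_integral_indicator[symmetric]) (simp add: iid_uniform01_def)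
  also have "\<dots> = (\<integral>\<^sup>+u. indicator {a..b} (0 + (\<Sum>i<n. u i powr q)) \<partial>iid_uniform01 n)"
    by (rule nn_integral_cong) (simp add: indicator_def)
  also have "\<dots> = (powr_avg q ^^ n) (indicator {a..b}) 0"
    by (rule nn_integral_iid_uniform01_sum_powr) simp
  finally show ?thesis .
qed

lemma window_avg_funpow_indicator_le_geometric:
  fixes k m :: nat
  assumes l: "l > 0" and ab: "a \<le> b"
  defines "A \<equiv> 2*(b-a) / (l * sqrt (max 1 k))"
  shows "(window_avg c l ^^ m) (indicator {a..b}) t \<le> ennreal (A + 2^k * (1/2)^m)"
proof (cases "m \<le> k")
  case True
  have "(1::real) \<le> 2^k * (1/2)^m"
    using True by (simp add: field_simps power_increasing)
  moreover have "A \<ge> 0" unfolding A_def using ab l by simp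
  ultimately have "(1::ennreal) \<le> ennreal (A + 2^k * (1/2)^m)"
    using ennreal_leI[of 1 "A + 2^k * (1/2)^m"] by simp
  then show ?thesis
    using l by (intro order_trans[OF window_avg_funpow_le]) (auto simp: indicator_def)
next
  case False
  then have "max 1 k \<le> m" by simp
  then have "2*(b-a) / (l * sqrt m) \<le> A"
    unfolding A_def using ab l by (intro divide_left_mono mult_left_mono) auto
  have "(window_avg c l ^^ m) (indicator {a..b}) t \<le> ennreal (2*(b-a) / (l * sqrt m))"
    using False l ab by (intro window_avg_funpow_indicator_le) auto
  also have "\<dots> \<le> ennreal (A + 2^k * (1/2)^m)"
    using \<open>2*(b-a) / (l * sqrt m) \<le> A\<close> by (intro ennreal_leI) (simp add: add_increasing2)
  finally show ?thesis .
qed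

lemma two_pow_floor_mul_pow_le_exp:
  fixes w :: real
  assumes "0 \<le> w" "w \<le> 1"
  shows "2 ^ nat \<lfloor>n * w / 2\<rfloor> * (1 - w/2)^n \<le> exp (- (1 - ln 2)/2 * (n * w))"
proof -
  have "(2::real) ^ nat \<lfloor>n * w / 2\<rfloor> = exp (nat \<lfloor>n * w / 2\<rfloor> * ln 2)"
    by (simp add: exp_of_nat_mult)
  also have "\<dots> \<le> exp (n * w / 2 * ln 2)"
    using assms of_int_floor_le[of "n * w / 2"] by (intro exp_mono mult_right_mono) auto
  finally have "(2::real) ^ nat \<lfloor>n * w / 2\<rfloor> \<le> exp (n * w / 2 * ln 2)" .
  moreover have "(1 - w/2)^n \<le> exp (- w/2)^n"
    using assms exp_ge_add_one_self[of "- w/2"] by (intro power_mono) auto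
  ultimately have "2 ^ nat \<lfloor>n * w / 2\<rfloor> * (1 - w/2)^n \<le> exp (n * w / 2 * ln 2) * exp (- w/2)^n"
    by (intro mult_mono) (use assms in auto)
  also have "\<dots> = exp (- (1 - ln 2)/2 * (n * w))"
    by (simp add: exp_of_nat_mult[symmetric] exp_add[symmetric] algebra_simps)
  finally show ?thesis .
qed

text \<open>With k = floor(x/2), the geometric term 2^k 2^-m of the window bound costs at most
  2^k (1 - w/2)^n \<le> exp(-(1 - ln 2) x/2) after mixing.\<close>
lemma powr_avg_funpow_indicator_le:
  assumes q: "q \<ge> 1" and ab: "a \<le> b" and n: "n \<ge> 1"
  defines "l \<equiv> 1 - (1/2::real) powr q"
  defines "x \<equiv> real n * l / q"
  shows "(powr_avg q ^^ n) (indicator {a..b}) s \<le> ennreal (4*(b-a) / (l * sqrt x) + exp (- (1 - ln 2)/2 * x))"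
proof -
  define c where "c = (1/2::real) powr q"
  define w where "w = l/q"
  define k where "k = nat \<lfloor>x/2\<rfloor>"
  define A where "A = 2*(b-a) / (l * sqrt (max 1 k))"
  have l: "1/2 \<le> l" "l \<le> 1" "l = 1 - c"
    unfolding l_def c_def using half_powr_le_half[OF q] by auto
  have w: "0 \<le> w" "w \<le> 1" and x: "x = n * w" "x > 0"
    unfolding w_def x_def using l q n by (auto simp: divide_le_eq)
  have "A \<ge> 0" unfolding A_def using ab l by simp
  have base: "(window_avg c l ^^ m) (indicator {a..b}) t \<le> ennreal (A + 2^k * (1/2)^m)" for m t
    unfolding A_def using l ab by (intro window_avg_funpow_indicator_le_geometric) auto
  have mixture: "(powr_avg q ^^ n) ((window_avg c l ^^ 0) (indicator {a..b})) s
      \<le> ennreal (A + 2^k * (1/2)^0 * (w * (1/2) + 1 - w)^n)"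
    unfolding w_def l(3) c_def
    by (rule powr_avg_funpow_window_mixture[OF q _ \<open>A \<ge> 0\<close>]) (use base in \<open>auto simp: l(3) c_def\<close>)
  have "w * (1/2) + 1 - w = 1 - w/2" by simp
  with mixture have "(powr_avg q ^^ n) (indicator {a..b}) s \<le> ennreal (A + 2^k * (1 - w/2)^n)"
    by simp
  also have "A + 2^k * (1 - w/2)^n \<le> 4*(b-a) / (l * sqrt x) + exp (- (1 - ln 2)/2 * x)"
  proof (rule add_mono)
    have "x/4 \<le> real (max 1 k)"
      unfolding k_def using x by linarith
    then have "sqrt x / 2 \<le> sqrt (max 1 k)"
      using real_sqrt_le_mono[of "x/4" "max 1 k"] by (simp add: real_sqrt_divide)
    then have "A \<le> 2*(b-a) / (l * (sqrt x / 2))"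
      unfolding A_def using ab l x by (intro divide_left_mono mult_left_mono mult_pos_pos) auto
    then show "A \<le> 4*(b-a) / (l * sqrt x)" by simp
    show "2^k * (1 - w/2)^n \<le> exp (- (1 - ln 2)/2 * x)"
      using two_pow_floor_mul_pow_le_exp[OF w, of n] unfolding k_def x by simp
  qed
  finally show ?thesis by (simp add: ennreal_leI)
qed

lemma anticoncentration_bound_rescale:
  fixes q l x :: real and d :: nat
  assumes q: "q \<ge> 1" and l: "1/2 \<le> l" and x: "x \<ge> real d / (4 * q)" and d: "d \<ge> 1" and ab: "a \<le> b"
  shows "4*(b-a) / (l * sqrt x) + exp (- (1 - ln 2)/2 * x)
       \<le> exp (- ((1 - ln 2) / 8) * real d / q) + 16 * (b - a) * sqrt (q / real d)"
proof -
  have "sqrt (real d / q) / 2 \<le> sqrt x"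
    using real_sqrt_le_mono[OF x] by (simp add: real_sqrt_divide real_sqrt_mult)
  then have "sqrt (real d / q) / 4 \<le> l * sqrt x"
    using l q mult_mono[of "1/2" l "sqrt (real d / q) / 2" "sqrt x"] by simp
  moreover have "sqrt (real d / q) > 0" using q d by simp
  moreover have "0 < real d / (4 * q)" using q d by simp
  then have "x > 0" using x by linarith
  ultimately have "4 / (l * sqrt x) \<le> 4 / (sqrt (real d / q) / 4)"
    using l by (intro divide_left_mono mult_pos_pos) auto
  then have "(b - a) * (4 / (l * sqrt x)) \<le> (b - a) * (16 / sqrt (real d / q))"
    using ab by (intro mult_left_mono) auto
  moreover have "16 / sqrt (real d / q) = 16 * sqrt (q / real d)"
    by (simp add: real_sqrt_divide)
  ultimately have "4*(b-a) / (l * sqrt x) \<le> 16 * (b - a) * sqrt (q / real d)"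
    by (simp add: algebra_simps)
  moreover have "exp (- (1 - ln 2)/2 * x) \<le> exp (- ((1 - ln 2) / 8) * real d / q)"
    using mult_left_mono[OF x, of "(1 - ln 2)/2"] ln_2_less_1 by (simp add: field_simps)
  ultimately show ?thesis by linarith
qed

theorem proposition5p2:
  shows "\<exists>c C :: real. c > 0 \<and> C > 0 \<and>
    (\<forall>(q::real) (d::nat) (a::real) (b::real).
       q \<ge> 1 \<longrightarrow> real d - 1 > 2 * q \<longrightarrow> a \<le> b \<longrightarrow>
       measure (iid_uniform01 (d - 1))
         {u \<in> space (iid_uniform01 (d - 1)). (\<Sum>i<d - 1. u i powr q) \<in> {a..b}}
       \<le> exp (- c * real d / q) + C * (b - a) * sqrt (q / real d))"
proof (intro exI conjI allI impI)
  show "(1 - ln 2) / 8 > (0::real)" "(16::real) > 0"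
    using ln_2_less_1 by auto
  fix q :: real and d :: nat and a b :: real
  assume q: "q \<ge> 1" and d: "real d - 1 > 2 * q" and ab: "a \<le> b"
  define l where "l = 1 - (1/2::real) powr q"
  define x where "x = real (d - 1) * l / q"
  have l: "1/2 \<le> l" unfolding l_def using half_powr_le_half[OF q] by auto
  have "real (d - 1) \<ge> real d / 2" "d - 1 \<ge> 1" using d q by linarith+
  then have "x \<ge> real d / (4 * q)"
    unfolding x_def using l q mult_mono[of "real d / 2" "real (d - 1)" "1/2" l] by (simp add: field_simps)
  have "measure (iid_uniform01 (d - 1))
         {u \<in> space (iid_uniform01 (d - 1)). (\<Sum>i<d - 1. u i powr q) \<in> {a..b}}
      \<le> 4*(b-a) / (l * sqrt x) + exp (- (1 - ln 2)/2 * x)"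
    unfolding measure_def emeasure_iid_uniform01_sum_powr_in_interval
    using powr_avg_funpow_indicator_le[OF q ab \<open>d - 1 \<ge> 1\<close>, of 0, folded l_def, folded x_def] ab l q
    by (intro enn2real_leI add_nonneg_nonneg) (auto simp: x_def)
  also have "\<dots> \<le> exp (- ((1 - ln 2) / 8) * real d / q) + 16 * (b - a) * sqrt (q / real d)"
    using anticoncentration_bound_rescale[OF q l \<open>x \<ge> real d / (4 * q)\<close> _ ab] \<open>d - 1 \<ge> 1\<close> by simp
  finally show "measure (iid_uniform01 (d - 1))
         {u \<in> space (iid_uniform01 (d - 1)). (\<Sum>i<d - 1. u i powr q) \<in> {a..b}}
       \<le> exp (- ((1 - ln 2) / 8) * real d / q) + 16 * (b - a) * sqrt (q / real d)" .
qed

end
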